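(* Let $h:\mathbb{R}^n \to \mathcal{Y}$ be a model with $\mathcal{Y} = \{\pm 1\}$, let $x\sim D$, let $g_1,g_2:\mathcal{X}\times\mathcal{Y} \to G$ be two EFs, and let $\epsilon,\epsilon_0,\epsilon_1,\alpha>0$ be constants. Assume that $g_1(x,h(x))$ and $g_2(x,h(x))$ $\epsilon$-intersect and denote by $\hat{g}(x,h(x))$ their $\epsilon$-union. If $g_1$ (or $g_2$) is $\epsilon_0$-valid with respect to $h$, then $\hat{g}$ is $\epsilon_0$-valid as well. Additionally, if $g_1$ (or $g_2$) is $(\epsilon_1,\alpha)$-complete with respect to $h$, then $\hat{g}$ is also $(\epsilon_1,\alpha)$-complete.
   Context: $D$ is a distribution supported on a discrete set $\mathcal{X}\subseteq\mathbb{R}^n$; $I(\cdot;\cdot)$ is Shannon mutual information of random variables that are functions of $x\sim D$; $\ell$ is a fixed loss function on $\mathcal{Y}\times\mathcal{Y}$. A function $q$ of $(x,h(x))$ with values in a set $Q$ is $\epsilon_0$-valid with respect to $h$ if there is $t:Q\to\mathcal{Y}$ with $\mathbb{E}_x[\ell(t(q(x,h(x))),h(x))]\le\epsilon_0$. Such $q$ is $(\epsilon_1,\alpha)$-complete with respect to $h$ if for every $d$, every $\bar g:\mathcal{X}\to\mathbb{R}^d$ with $I(q(x,h(x));\bar g(x))\le\epsilon_1$, and every $s:\mathbb{R}^d\to\mathcal{Y}$, $\mathbb{E}_x[\ell(s(\bar g(x)),h(x))]\ge\alpha$. Random variables $f_1(x)\in\mathcal{X}_1$, $f_2(x)\in\mathcal{X}_2$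 $\epsilon$-intersect if there are invertible functions $r_1:\mathcal{X}_1\to\mathcal{V}_1$, $r_2:\mathcal{X}_2\to\mathcal{V}_2$ with $r_1(f_1(x))=(e_1(x),u(x))$ and $r_2(f_2(x))=(e_2(x),u(x))$, where $I(e_i(x);f_j(x))\le\epsilon$ for $i\neq j\in\{1,2\}$; $u(x)$ is the $\epsilon$-intersection and $(e_1(x),u(x),e_2(x))$ the $\epsilon$-union of $f_1(x)$ and $f_2(x)$. *)

theory Defs
  imports "HOL-Probability.Probability"
begin

text \<open>It is the (possibly infinite) sum over the support of the joint law of
  p(a,b) log2 (p(a,b) / (p(a) p(b))), taken as (sum of positive parts) minus
  (sum of negative parts); the negative parts always have a finite sum.\<close>
definition mutual_info :: "'x pmf \<Rightarrow> ('x \<Rightarrow> 'a) \<Rightarrow> ('x \<Rightarrow> 'b) \<Rightarrow> ereal" where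
  "mutual_info D f g =
    (let J = map_pmf (\<lambda>x. (f x, g x)) D;
         P = map_pmf f D;
         Q = map_pmf g D;
         t = (\<lambda>z. pmf J z * log 2 (pmf J z / (pmf P (fst z) * pmf Q (snd z))))
     in enn2ereal (\<integral>\<^sup>+ z. ennreal (max 0 (t z)) \<partial>count_space UNIV)
        - enn2ereal (\<integral>\<^sup>+ z. ennreal (max 0 (- t z)) \<partial>count_space UNIV))"

text \<open>Labels are Y = {-1, 1} (as integers); l is the loss on Y x Y.
  An explanation q is a function of (x, h(x)).\<close>
definition valid ::
  "'x pmf \<Rightarrow> (int \<Rightarrow> int \<Rightarrow> real) \<Rightarrow> ('x \<Rightarrow> int) \<Rightarrow> real \<Rightarrow> ('x \<Rightarrow> int \<Rightarrow> 'q) \<Rightarrow> bool" where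
  "valid D l h eps0 q \<longleftrightarrow>
     (\<exists>t :: 'q \<Rightarrow> int. (\<forall>z. t z \<in> {-1, 1}) \<and>
        measure_pmf.expectation D (\<lambda>x. l (t (q x (h x))) (h x)) \<le> eps0)"

text \<open>Completeness: every gbar : X -> R^d (R^d rendered as real lists of length d)
  with I(q(x,h(x)); gbar(x)) \<le> eps1 and every s : R^d -> Y incur expected loss \<ge> alpha.\<close>
definition eps_complete ::
  "'x pmf \<Rightarrow> (int \<Rightarrow> int \<Rightarrow> real) \<Rightarrow> ('x \<Rightarrow> int) \<Rightarrow> real \<Rightarrow> real \<Rightarrow> ('x \<Rightarrow> int \<Rightarrow> 'q) \<Rightarrow> bool" where
  "eps_complete D l h eps1 alpha q \<longleftrightarrow>
     (\<forall>(d::nat) (gbar :: 'x \<Rightarrow> real list) (s :: real list \<Rightarrow> int).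
        (\<forall>x. length (gbar x) = d) \<longrightarrow> (\<forall>v. s v \<in> {-1, 1}) \<longrightarrow>
        mutual_info D (\<lambda>x. q x (h x)) gbar \<le> ereal eps1 \<longrightarrow>
        measure_pmf.expectation D (\<lambda>x. l (s (gbar x)) (h x)) \<ge> alpha)"

text \<open>f1(x), f2(x) eps-intersect, witnessed by invertible r1, r2 and the
  components e1, u, e2 (u is the eps-intersection, (e1,u,e2) the eps-union).\<close>
definition eps_intersect ::
  "'x pmf \<Rightarrow> real \<Rightarrow> ('x \<Rightarrow> 'a) \<Rightarrow> ('x \<Rightarrow> 'b) \<Rightarrow> ('a \<Rightarrow> 'e1 \<times> 'u) \<Rightarrow> ('b \<Rightarrow> 'e2 \<times> 'u)
   \<Rightarrow> ('x \<Rightarrow> 'e1) \<Rightarrow> ('x \<Rightarrow> 'u) \<Rightarrow> ('x \<Rightarrow> 'e2) \<Rightarrow> bool" where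
  "eps_intersect D eps f1 f2 r1 r2 e1 u e2 \<longleftrightarrow>
     inj r1 \<and> inj r2 \<and>
     (\<forall>x\<in>set_pmf D. r1 (f1 x) = (e1 x, u x) \<and> r2 (f2 x) = (e2 x, u x)) \<and>
     mutual_info D e1 f2 \<le> ereal eps \<and> mutual_info D e2 f1 \<le> ereal eps"

end

theory Submission
  imports Defs
begin

text \<open>Each explanation g_i(x, h(x)) is a function of the \<epsilon>-union (e_1, u, e_2), namely
  the inverse of r_i applied to two of its components. A decoder for g_i therefore composes
  to a decoder for the union, which gives validity. For completeness, the data processing
  inequality I(\<phi>(Z); Y) \<le> I(Z; Y) shows that any \<open>gbar\<close> carrying little information
  about the union carries little information about g_i, so it inherits the loss bound of g_i.

  Since mutual information is a signed, possibly infinite sum, the data processing inequality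
  is proved by hand: on the support of the joint law J of (Z, Y), the difference of the
  pointwise mutual informations of (Z, Y) and (\<phi>(Z), Y) is log (J / N), where N is the law
  under which Z and Y are conditionally independent given \<phi>(Z). By Gibbs' inequality the
  negative part of this difference has smaller integral than its positive part, and the
  negative parts of both mutual informations are finite.\<close>

lemma gibbs_pointwise:
  fixes p q :: real
  assumes p_nonneg: "p \<ge> 0" and q_nonneg: "q \<ge> 0" and q_pos: "p > 0 \<Longrightarrow> q > 0"
  shows "p * max 0 (- log 2 (p / q)) \<le> q / ln 2"
    and "p * max 0 (- log 2 (p / q)) + p / ln 2 \<le> p * max 0 (log 2 (p / q)) + q / ln 2"
proof -
  have neg_log_ratio_le: "p * (- log 2 (p / q)) \<le> (q - p) / ln 2"
  proof (cases "p = 0")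
    case True
    then show ?thesis using q_nonneg by simp
  next
    case False
    with p_nonneg q_pos have "p > 0" "q > 0" by auto
    have "- log 2 (p / q) = ln (q / p) / ln 2"
      using \<open>p > 0\<close> \<open>q > 0\<close> by (simp add: log_def ln_div minus_divide_left)
    also have "\<dots> \<le> (q / p - 1) / ln 2"
      using \<open>p > 0\<close> \<open>q > 0\<close> by (intro divide_right_mono ln_le_minus_one) auto
    finally have "p * (- log 2 (p / q)) \<le> p * ((q / p - 1) / ln 2)"
      using \<open>p > 0\<close> by (intro mult_left_mono) auto
    also have "\<dots> = (q - p) / ln 2" using \<open>p > 0\<close> by (simp add: field_simps)
    finally show ?thesis .
  qed
  show "p * max 0 (- log 2 (p / q)) \<le> q / ln 2"
  proof (cases "- log 2 (p / q) \<ge> 0")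
    case True
    then have "p * max 0 (- log 2 (p / q)) = p * (- log 2 (p / q))" by simp
    also have "\<dots> \<le> (q - p) / ln 2" by (rule neg_log_ratio_le)
    also have "\<dots> \<le> q / ln 2" using p_nonneg by (simp add: divide_right_mono)
    finally show ?thesis .
  next
    case False
    then show ?thesis using q_nonneg by simp
  qed
  have "p * max 0 (- log 2 (p / q)) - p * max 0 (log 2 (p / q)) = p * (- log 2 (p / q))"
    by (simp add: max_def algebra_simps)
  then show "p * max 0 (- log 2 (p / q)) + p / ln 2 \<le> p * max 0 (log 2 (p / q)) + q / ln 2"
    using neg_log_ratio_le by (simp add: diff_divide_distrib)
qed

lemma nn_integral_measure_pmf_real:
  fixes J :: "'a pmf" and f :: "'a \<Rightarrow> real"
  assumes "\<And>x. f x \<ge> 0"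
  shows "(\<integral>\<^sup>+x. ennreal (f x) \<partial>J) = (\<integral>\<^sup>+x. ennreal (pmf J x * f x) \<partial>count_space UNIV)"
  using assms by (simp add: nn_integral_measure_pmf ennreal_mult)

lemma nn_integral_pmf_div_ln2:
  "(\<integral>\<^sup>+x. ennreal (pmf N x / ln 2) \<partial>count_space UNIV) = ennreal (1 / ln 2)"
proof -
  have "(\<integral>\<^sup>+x. ennreal (pmf N x / ln 2) \<partial>count_space UNIV)
      = (\<integral>\<^sup>+x. ennreal (pmf N x) * ennreal (1 / ln 2) \<partial>count_space UNIV)"
    by (intro nn_integral_cong) (simp add: ennreal_mult[symmetric])
  also have "\<dots> = ennreal (1 / ln 2)"
    by (simp add: nn_integral_multc nn_integral_pmf measure_pmf.emeasure_space_1[simplified])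
  finally show ?thesis .
qed

lemma pmf_pos_of_set_pmf_subset:
  assumes "set_pmf J \<subseteq> set_pmf N" and "pmf J x > 0"
  shows "pmf N x > 0"
proof -
  have "x \<in> set_pmf J" using assms(2) by (simp add: set_pmf_iff)
  then show ?thesis using assms(1) by (auto intro: pmf_positive)
qed

lemma gibbs_neg_part_le:
  assumes "set_pmf J \<subseteq> set_pmf N"
  shows "(\<integral>\<^sup>+x. ennreal (max 0 (- log 2 (pmf J x / pmf N x))) \<partial>J) \<le> ennreal (1 / ln 2)"
proof -
  have "(\<integral>\<^sup>+x. ennreal (max 0 (- log 2 (pmf J x / pmf N x))) \<partial>J)
      = (\<integral>\<^sup>+x. ennreal (pmf J x * max 0 (- log 2 (pmf J x / pmf N x))) \<partial>count_space UNIV)"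
    by (rule nn_integral_measure_pmf_real) simp
  also have "\<dots> \<le> (\<integral>\<^sup>+x. ennreal (pmf N x / ln 2) \<partial>count_space UNIV)"
    using assms
    by (intro nn_integral_mono ennreal_leI
        gibbs_pointwise(1)[OF pmf_nonneg pmf_nonneg pmf_pos_of_set_pmf_subset])
  finally show ?thesis by (simp only: nn_integral_pmf_div_ln2)
qed

lemma gibbs_neg_part_le_pos_part:
  assumes "set_pmf J \<subseteq> set_pmf N"
  shows "(\<integral>\<^sup>+x. ennreal (max 0 (- log 2 (pmf J x / pmf N x))) \<partial>J)
         \<le> (\<integral>\<^sup>+x. ennreal (max 0 (log 2 (pmf J x / pmf N x))) \<partial>J)"
proof -
  let ?L = "\<lambda>x. log 2 (pmf J x / pmf N x)"
  have "(\<integral>\<^sup>+x. ennreal (max 0 (- ?L x)) \<partial>J) + ennreal (1 / ln 2)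
      = (\<integral>\<^sup>+x. ennreal (pmf J x * max 0 (- ?L x)) \<partial>count_space UNIV)
        + (\<integral>\<^sup>+x. ennreal (pmf J x / ln 2) \<partial>count_space UNIV)"
    using nn_integral_measure_pmf_real[of "\<lambda>x. max 0 (- ?L x)" J]
    by (simp add: nn_integral_pmf_div_ln2)
  also have "\<dots> = (\<integral>\<^sup>+x. ennreal (pmf J x * max 0 (- ?L x) + pmf J x / ln 2) \<partial>count_space UNIV)"
    by (subst nn_integral_add[symmetric]) (auto intro!: nn_integral_cong)
  also have "\<dots> \<le> (\<integral>\<^sup>+x. ennreal (pmf J x * max 0 (?L x) + pmf N x / ln 2) \<partial>count_space UNIV)"
    using assms
    by (intro nn_integral_mono ennreal_leI
        gibbs_pointwise(2)[OF pmf_nonneg pmf_nonneg pmf_pos_of_set_pmf_subset])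
  also have "\<dots> = (\<integral>\<^sup>+x. ennreal (pmf J x * max 0 (?L x)) \<partial>count_space UNIV)
        + (\<integral>\<^sup>+x. ennreal (pmf N x / ln 2) \<partial>count_space UNIV)"
    by (subst nn_integral_add[symmetric]) (auto intro!: nn_integral_cong)
  also have "\<dots> = (\<integral>\<^sup>+x. ennreal (max 0 (?L x)) \<partial>J) + ennreal (1 / ln 2)"
    using nn_integral_measure_pmf_real[of "\<lambda>x. max 0 (?L x)" J]
    by (simp add: nn_integral_pmf_div_ln2)
  finally show ?thesis
    by (simp add: ennreal_add_left_cancel_le add.commute)
qed

definition pmi :: "('a \<times> 'b) pmf \<Rightarrow> 'a \<times> 'b \<Rightarrow> real" where
  "pmi J z = log 2 (pmf J z / (pmf (map_pmf fst J) (fst z) * pmf (map_pmf snd J) (snd z)))"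

text \<open>In \<open>ereal\<close>, \<open>\<infinity> - \<infinity> = \<infinity>\<close>; all uses below have a finite negative part.\<close>

definition signed_integral :: "'a pmf \<Rightarrow> ('a \<Rightarrow> real) \<Rightarrow> ereal" where
  "signed_integral J f =
     enn2ereal (\<integral>\<^sup>+w. ennreal (max 0 (f w)) \<partial>J) - enn2ereal (\<integral>\<^sup>+w. ennreal (max 0 (- f w)) \<partial>J)"

lemma mutual_info_eq_signed_integral_pmi:
  fixes D :: "'x pmf" and f :: "'x \<Rightarrow> 'a" and g :: "'x \<Rightarrow> 'b"
  defines "J \<equiv> map_pmf (\<lambda>x. (f x, g x)) D"
  shows "mutual_info D f g = signed_integral J (pmi J)"
proof -
  have marginals: "map_pmf fst J = map_pmf f D" "map_pmf snd J = map_pmf g D"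
    unfolding J_def by (simp_all add: pmf.map_comp o_def)
  have max_mult: "max 0 (p * a) = p * max 0 a" if "p \<ge> 0" for p a :: real
    using that by (auto simp: max_def zero_le_mult_iff mult_le_0_iff)
  have "(\<integral>\<^sup>+z. ennreal (max 0 (pmi J z)) \<partial>J)
      = (\<integral>\<^sup>+z. ennreal (pmf J z * max 0 (pmi J z)) \<partial>count_space UNIV)"
    by (rule nn_integral_measure_pmf_real) simp
  moreover have "(\<integral>\<^sup>+z. ennreal (max 0 (- pmi J z)) \<partial>J)
      = (\<integral>\<^sup>+z. ennreal (pmf J z * max 0 (- pmi J z)) \<partial>count_space UNIV)"
    by (rule nn_integral_measure_pmf_real) simp
  ultimately show ?thesis
    unfolding mutual_info_def Let_def J_def[symmetric] signed_integral_def
    by (simp add: max_mult[symmetric] pmi_def marginals)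
qed

lemma pmf_marginals_pos:
  assumes "z \<in> set_pmf J"
  shows "pmf (map_pmf fst J) (fst z) > 0" and "pmf (map_pmf snd J) (snd z) > 0"
  using assms by (auto intro!: pmf_positive)

lemma pmi_neg_part_le:
  fixes J :: "('a \<times> 'b) pmf"
  shows "(\<integral>\<^sup>+z. ennreal (max 0 (- pmi J z)) \<partial>J) \<le> ennreal (1 / ln 2)"
proof -
  let ?N = "pair_pmf (map_pmf fst J) (map_pmf snd J)"
  have "(\<integral>\<^sup>+z. ennreal (max 0 (- pmi J z)) \<partial>J)
      = (\<integral>\<^sup>+z. ennreal (max 0 (- log 2 (pmf J z / pmf ?N z))) \<partial>J)"
    unfolding pmi_def by (intro nn_integral_cong) (auto simp: pmf_pair split: prod.splits)
  also have "\<dots> \<le> ennreal (1 / ln 2)"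
    by (rule gibbs_neg_part_le) (force simp: image_iff)
  finally show ?thesis .
qed

definition cond_indep_pmf :: "('a \<times> 'b) pmf \<Rightarrow> ('a \<Rightarrow> 'c) \<Rightarrow> ('a \<times> 'b) pmf" where
  "cond_indep_pmf J \<phi> =
     bind_pmf J (\<lambda>(z, y). map_pmf (\<lambda>z'. (z', y)) (cond_pmf (map_pmf fst J) {z'. \<phi> z' = \<phi> z}))"

lemma pmf_cond_indep_pmf:
  fixes J :: "('a \<times> 'b) pmf" and \<phi> :: "'a \<Rightarrow> 'c"
  assumes "(z, y) \<in> set_pmf J"
  shows "pmf (cond_indep_pmf J \<phi>) (z, y)
    = pmf (map_pmf fst J) z * pmf (map_pmf (apfst \<phi>) J) (\<phi> z, y)
      / pmf (map_pmf \<phi> (map_pmf fst J)) (\<phi> z)"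
proof -
  define P where "P = map_pmf fst J"
  define S where "S = (\<lambda>z'. {z''. \<phi> z'' = \<phi> z'})"
  define A where "A = {(z', y'). \<phi> z' = \<phi> z \<and> y' = y}"
  define c where "c = pmf P z / measure P (S z)"
  have "c \<ge> 0" unfolding c_def by simp
  have pmf_fiber:
    "pmf (map_pmf (\<lambda>z''. (z'', y')) (cond_pmf P (S z'))) (z, y) = indicator A (z', y') * c"
    if "(z', y') \<in> set_pmf J" for z' y'
  proof (cases "y' = y")
    case True
    have "set_pmf P \<inter> S z' \<noteq> {}"
      using that unfolding P_def S_def by (force simp: image_iff)
    have "inj (\<lambda>z''. (z'', y'))" by (auto intro: injI)
    then have "pmf (map_pmf (\<lambda>z''. (z'', y')) (cond_pmf P (S z'))) (z, y)
        = pmf (cond_pmf P (S z')) z"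
      using pmf_map_inj' True by metis
    also have "\<dots> = (if z \<in> S z' then pmf P z / measure P (S z') else 0)"
      by (rule pmf_cond) fact
    also have "\<dots> = indicator A (z', y') * c"
      using True unfolding A_def c_def S_def by (auto simp: indicator_def)
    finally show ?thesis .
  next
    case False
    then have "(z, y) \<notin> (\<lambda>z''. (z'', y')) ` set_pmf (cond_pmf P (S z'))" by auto
    then show ?thesis using False by (simp add: pmf_map_outside A_def indicator_def)
  qed
  have "ennreal (pmf (cond_indep_pmf J \<phi>) (z, y))
      = (\<integral>\<^sup>+w. ennreal (pmf (map_pmf (\<lambda>z''. (z'', snd w)) (cond_pmf P (S (fst w)))) (z, y)) \<partial>J)"
    unfolding cond_indep_pmf_def P_def S_def by (simp add: ennreal_pmf_bind split_beta)
  also have "\<dots> = (\<integral>\<^sup>+w. ennreal c * indicator A w \<partial>J)"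
    by (intro nn_integral_cong_AE AE_pmfI) (auto simp: pmf_fiber \<open>c \<ge> 0\<close> indicator_def)
  also have "\<dots> = ennreal c * emeasure J A" by (simp add: nn_integral_cmult_indicator)
  also have "emeasure J A = ennreal (pmf (map_pmf (apfst \<phi>) J) (\<phi> z, y))"
  proof -
    have "apfst \<phi> -` {(\<phi> z, y)} = A" unfolding A_def by auto
    then show ?thesis by (simp add: ennreal_pmf_map nn_integral_indicator)
  qed
  finally have "ennreal (pmf (cond_indep_pmf J \<phi>) (z, y))
      = ennreal (c * pmf (map_pmf (apfst \<phi>) J) (\<phi> z, y))"
    using \<open>c \<ge> 0\<close> by (simp add: ennreal_mult)
  moreover have "measure P (S z) = pmf (map_pmf \<phi> P) (\<phi> z)"
    unfolding S_def by (simp add: pmf_map vimage_def)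
  ultimately show ?thesis
    using \<open>c \<ge> 0\<close> unfolding c_def P_def by simp
qed

lemma pmi_minus_pmi_apfst:
  fixes J :: "('a \<times> 'b) pmf" and \<phi> :: "'a \<Rightarrow> 'c"
  assumes w: "w \<in> set_pmf J"
  shows "pmf (cond_indep_pmf J \<phi>) w > 0"
    and "pmi J w - pmi (map_pmf (apfst \<phi>) J) (apfst \<phi> w)
         = log 2 (pmf J w / pmf (cond_indep_pmf J \<phi>) w)"
proof -
  define JW where "JW = map_pmf (apfst \<phi>) J"
  define P where "P = map_pmf fst J"
  obtain z y where zy: "w = (z, y)" by (cases w)
  have fst_JW: "map_pmf fst JW = map_pmf \<phi> P" and snd_JW: "map_pmf snd JW = map_pmf snd J"
    unfolding JW_def P_def by (simp_all add: pmf.map_comp o_def)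
  have "(\<phi> z, y) \<in> set_pmf JW" using w zy unfolding JW_def by force
  then have pos: "pmf J (z, y) > 0" "pmf P z > 0" "pmf (map_pmf snd J) y > 0"
    "pmf JW (\<phi> z, y) > 0" "pmf (map_pmf \<phi> P) (\<phi> z) > 0"
    using w zy pmf_marginals_pos[of w J] pmf_marginals_pos[of "(\<phi> z, y)" JW] fst_JW
    unfolding P_def by (auto simp: pmf_positive)
  have N: "pmf (cond_indep_pmf J \<phi>) (z, y) = pmf P z * pmf JW (\<phi> z, y) / pmf (map_pmf \<phi> P) (\<phi> z)"
    unfolding JW_def P_def using w zy by (intro pmf_cond_indep_pmf) simp
  then show "pmf (cond_indep_pmf J \<phi>) w > 0" using pos zy by simp
  show "pmi J w - pmi JW (apfst \<phi> w) = log 2 (pmf J w / pmf (cond_indep_pmf J \<phi>) w)"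
    unfolding pmi_def zy N fst_JW snd_JW P_def[symmetric] using pos
    by (simp add: log_divide log_mult)
qed

lemma enn2ereal_diff_le_of_balance:
  fixes pa na pb nb cp cn :: ennreal
  assumes balance: "pa + nb + cp = na + pb + cn" and "cn \<le> cp" and "cp \<le> pb + na"
    and "nb < \<top>" and "na < \<top>"
  shows "enn2ereal pa - enn2ereal na \<le> enn2ereal pb - enn2ereal nb"
proof (cases "pb = \<top>")
  case True
  then show ?thesis using \<open>nb < \<top>\<close> by (cases nb rule: ennreal_cases) auto
next
  case False
  then have "pb < \<top>" by (simp add: less_top)
  with \<open>cp \<le> pb + na\<close> \<open>na < \<top>\<close> have "cp \<noteq> \<top>" by (auto simp: top_unique)
  have "pa + nb + cp \<le> na + pb + cp" using balance \<open>cn \<le> cp\<close> by (simp add: add_left_mono)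
  with \<open>cp \<noteq> \<top>\<close> have le: "pa + nb \<le> na + pb"
    by (simp add: ennreal_add_left_cancel_le add.commute[of _ cp])
  then have "pa < \<top>" using \<open>pb < \<top>\<close> \<open>na < \<top>\<close>
    by (metis ennreal_add_eq_top le_iff_add less_top)
  then show ?thesis
    using le \<open>pb < \<top>\<close> \<open>na < \<top>\<close> \<open>nb < \<top>\<close>
    by (cases pa rule: ennreal_cases; cases na rule: ennreal_cases;
        cases pb rule: ennreal_cases; cases nb rule: ennreal_cases)
       (auto simp: ennreal_plus[symmetric] ennreal_le_iff simp del: ennreal_plus)
qed

lemma signed_integral_le_of_diff:
  fixes J :: "'a pmf" and a b :: "'a \<Rightarrow> real"
  assumes diff: "(\<integral>\<^sup>+w. ennreal (max 0 (a w - b w)) \<partial>J)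
                 \<le> (\<integral>\<^sup>+w. ennreal (max 0 (b w - a w)) \<partial>J)"
    and "(\<integral>\<^sup>+w. ennreal (max 0 (- a w)) \<partial>J) < \<top>"
    and "(\<integral>\<^sup>+w. ennreal (max 0 (- b w)) \<partial>J) < \<top>"
  shows "signed_integral J a \<le> signed_integral J b"
proof -
  let ?I = "\<lambda>f. \<integral>\<^sup>+w. ennreal (max 0 (f w)) \<partial>J"
  have ennreal_add_max: "ennreal (max 0 r) + ennreal (max 0 s) = ennreal (max 0 r + max 0 s)"
    for r s :: real
    by (simp add: ennreal_plus)
  have balance_pointwise:
    "ennreal (max 0 (a w)) + ennreal (max 0 (- b w)) + ennreal (max 0 (b w - a w))
     = ennreal (max 0 (- a w)) + ennreal (max 0 (b w)) + ennreal (max 0 (a w - b w))" for w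
    unfolding ennreal_add_max
      ennreal_plus[OF add_nonneg_nonneg[OF max.cobounded1 max.cobounded1] max.cobounded1, symmetric]
    by (rule arg_cong[where f = ennreal]) (simp add: max_def)
  have "?I a + ?I (\<lambda>w. - b w) + ?I (\<lambda>w. b w - a w)
      = (\<integral>\<^sup>+w. ennreal (max 0 (a w)) + ennreal (max 0 (- b w)) + ennreal (max 0 (b w - a w)) \<partial>J)"
    by (simp add: nn_integral_add)
  also have "\<dots>
      = (\<integral>\<^sup>+w. ennreal (max 0 (- a w)) + ennreal (max 0 (b w)) + ennreal (max 0 (a w - b w)) \<partial>J)"
    by (simp only: balance_pointwise)
  also have "\<dots> = ?I (\<lambda>w. - a w) + ?I b + ?I (\<lambda>w. a w - b w)"
    by (simp add: nn_integral_add)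
  finally have balance: "?I a + ?I (\<lambda>w. - b w) + ?I (\<lambda>w. b w - a w)
      = ?I (\<lambda>w. - a w) + ?I b + ?I (\<lambda>w. a w - b w)" .
  have "?I (\<lambda>w. b w - a w) \<le> (\<integral>\<^sup>+w. ennreal (max 0 (b w)) + ennreal (max 0 (- a w)) \<partial>J)"
    unfolding ennreal_add_max by (intro nn_integral_mono ennreal_leI) (simp add: max_def)
  also have "\<dots> = ?I b + ?I (\<lambda>w. - a w)"
    by (simp add: nn_integral_add)
  finally have "?I (\<lambda>w. b w - a w) \<le> ?I b + ?I (\<lambda>w. - a w)" .
  from balance diff this assms(3,2) show ?thesis
    unfolding signed_integral_def by (rule enn2ereal_diff_le_of_balance)
qed

lemma signed_integral_pmi_map_apfst_le:
  fixes J :: "('a \<times> 'b) pmf" and \<phi> :: "'a \<Rightarrow> 'c"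
  shows "signed_integral (map_pmf (apfst \<phi>) J) (pmi (map_pmf (apfst \<phi>) J))
         \<le> signed_integral J (pmi J)"
proof -
  define N where "N = cond_indep_pmf J \<phi>"
  define a where "a = (\<lambda>w. pmi (map_pmf (apfst \<phi>) J) (apfst \<phi> w))"
  have signed_integral_map:
    "signed_integral (map_pmf (apfst \<phi>) J) (pmi (map_pmf (apfst \<phi>) J)) = signed_integral J a"
    unfolding signed_integral_def a_def by simp
  have "set_pmf J \<subseteq> set_pmf N"
  proof
    fix w assume "w \<in> set_pmf J"
    then have "pmf N w > 0" unfolding N_def by (rule pmi_minus_pmi_apfst(1))
    then show "w \<in> set_pmf N" by (simp add: set_pmf_iff)
  qed
  have "(\<integral>\<^sup>+w. ennreal (max 0 (a w - pmi J w)) \<partial>J)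
      = (\<integral>\<^sup>+w. ennreal (max 0 (- log 2 (pmf J w / pmf N w))) \<partial>J)"
    unfolding a_def N_def
    by (intro nn_integral_cong_AE AE_pmfI) (simp flip: pmi_minus_pmi_apfst(2))
  also have "\<dots> \<le> (\<integral>\<^sup>+w. ennreal (max 0 (log 2 (pmf J w / pmf N w))) \<partial>J)"
    using \<open>set_pmf J \<subseteq> set_pmf N\<close> by (rule gibbs_neg_part_le_pos_part)
  also have "\<dots> = (\<integral>\<^sup>+w. ennreal (max 0 (pmi J w - a w)) \<partial>J)"
    unfolding a_def N_def
    by (intro nn_integral_cong_AE AE_pmfI) (simp flip: pmi_minus_pmi_apfst(2))
  finally have "(\<integral>\<^sup>+w. ennreal (max 0 (a w - pmi J w)) \<partial>J)
      \<le> (\<integral>\<^sup>+w. ennreal (max 0 (pmi J w - a w)) \<partial>J)" .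
  moreover have "(\<integral>\<^sup>+w. ennreal (max 0 (- a w)) \<partial>J) < \<top>"
    using pmi_neg_part_le[of "map_pmf (apfst \<phi>) J"] unfolding a_def
    by (simp add: order_le_less_trans)
  moreover have "(\<integral>\<^sup>+w. ennreal (max 0 (- pmi J w)) \<partial>J) < \<top>"
    using pmi_neg_part_le[of J] by (simp add: order_le_less_trans)
  ultimately show ?thesis
    unfolding signed_integral_map by (rule signed_integral_le_of_diff)
qed

lemma mutual_info_comp_le: "mutual_info D (\<lambda>x. \<phi> (f x)) g \<le> mutual_info D f g"
proof -
  have "map_pmf (\<lambda>x. (\<phi> (f x), g x)) D = map_pmf (apfst \<phi>) (map_pmf (\<lambda>x. (f x, g x)) D)"
    by (simp add: pmf.map_comp o_def)
  then show ?thesis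
    unfolding mutual_info_eq_signed_integral_pmi by (simp only: signed_integral_pmi_map_apfst_le)
qed

lemma mutual_info_cong:
  assumes "\<And>x. x \<in> set_pmf D \<Longrightarrow> f x = f' x"
  shows "mutual_info D f g = mutual_info D f' g"
proof -
  have "map_pmf (\<lambda>x. (f x, g x)) D = map_pmf (\<lambda>x. (f' x, g x)) D"
    using assms by (intro map_pmf_cong) auto
  then show ?thesis unfolding mutual_info_eq_signed_integral_pmi by simp
qed

lemma valid_if_determined:
  assumes "valid D l h eps0 g" and "\<And>x. x \<in> set_pmf D \<Longrightarrow> g x (h x) = \<phi> (q x (h x))"
  shows "valid D l h eps0 q"
proof -
  from assms(1) obtain t where t_range: "\<forall>z. t z \<in> {-1, 1}"
    and t_loss: "measure_pmf.expectation D (\<lambda>x. l (t (g x (h x))) (h x)) \<le> eps0"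
    unfolding valid_def by blast
  have "measure_pmf.expectation D (\<lambda>x. l ((t \<circ> \<phi>) (q x (h x))) (h x))
      = measure_pmf.expectation D (\<lambda>x. l (t (g x (h x))) (h x))"
    using assms(2) by (intro integral_cong_AE AE_pmfI) auto
  then show ?thesis
    unfolding valid_def using t_range t_loss by (intro exI[of _ "t \<circ> \<phi>"]) auto
qed

lemma eps_complete_if_determined:
  fixes D :: "'x pmf"
  assumes "eps_complete D l h eps1 alpha g" and "\<And>x. x \<in> set_pmf D \<Longrightarrow> g x (h x) = \<phi> (q x (h x))"
  shows "eps_complete D l h eps1 alpha q"
  unfolding eps_complete_def
proof (intro allI impI)
  fix d and gbar :: "'x \<Rightarrow> real list" and s :: "real list \<Rightarrow> int"
  assume "\<forall>x. length (gbar x) = d" and "\<forall>v. s v \<in> {-1, 1}"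
    and "mutual_info D (\<lambda>x. q x (h x)) gbar \<le> ereal eps1"
  have "mutual_info D (\<lambda>x. g x (h x)) gbar = mutual_info D (\<lambda>x. \<phi> (q x (h x))) gbar"
    using assms(2) by (rule mutual_info_cong)
  also have "\<dots> \<le> mutual_info D (\<lambda>x. q x (h x)) gbar" by (rule mutual_info_comp_le)
  also have "\<dots> \<le> ereal eps1" by fact
  finally show "measure_pmf.expectation D (\<lambda>x. l (s (gbar x)) (h x)) \<ge> alpha"
    using assms(1) \<open>\<forall>x. length (gbar x) = d\<close> \<open>\<forall>v. s v \<in> {-1, 1}\<close>
    unfolding eps_complete_def by blast
qed

lemma eps_intersect_determined_by_union:
  assumes "eps_intersect D eps f1 f2 r1 r2 e1 u e2" and "x \<in> set_pmf D"
  shows "f1 x = inv r1 (e1 x, u x)" and "f2 x = inv r2 (e2 x, u x)"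
  using assms unfolding eps_intersect_def by (metis inv_f_f)+

theorem lemma1:
  fixes D :: "(real ^ 'n) pmf"
    and l :: "int \<Rightarrow> int \<Rightarrow> real"
    and h :: "real ^ 'n \<Rightarrow> int"
    and g1 g2 :: "real ^ 'n \<Rightarrow> int \<Rightarrow> 'g"
    and r1 :: "'g \<Rightarrow> 'e1 \<times> 'u" and r2 :: "'g \<Rightarrow> 'e2 \<times> 'u"
    and e1 :: "real ^ 'n \<Rightarrow> 'e1" and u :: "real ^ 'n \<Rightarrow> 'u" and e2 :: "real ^ 'n \<Rightarrow> 'e2"
    and eps eps0 eps1 alpha :: real
  assumes "\<forall>x. h x \<in> {-1, 1}"
    and "eps > 0" and "eps0 > 0" and "eps1 > 0" and "alpha > 0"
    and "eps_intersect D eps (\<lambda>x. g1 x (h x)) (\<lambda>x. g2 x (h x)) r1 r2 e1 u e2"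
  shows "(valid D l h eps0 g1 \<or> valid D l h eps0 g2
            \<longrightarrow> valid D l h eps0 (\<lambda>x y. (e1 x, u x, e2 x))) \<and>
         (eps_complete D l h eps1 alpha g1 \<or> eps_complete D l h eps1 alpha g2
            \<longrightarrow> eps_complete D l h eps1 alpha (\<lambda>x y. (e1 x, u x, e2 x)))"
proof -
  let ?union = "\<lambda>x y. (e1 x, u x, e2 x)"
  have g1_union: "g1 x (h x) = (\<lambda>(a, b, _). inv r1 (a, b)) (?union x (h x))"
    if "x \<in> set_pmf D" for x
    using eps_intersect_determined_by_union(1)[OF assms(6) that] by simp
  have g2_union: "g2 x (h x) = (\<lambda>(_, b, c). inv r2 (c, b)) (?union x (h x))"
    if "x \<in> set_pmf D" for x
    using eps_intersect_determined_by_union(2)[OF assms(6) that] by simp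
  show ?thesis
    using valid_if_determined[where g = g1 and q = ?union, OF _ g1_union]
      valid_if_determined[where g = g2 and q = ?union, OF _ g2_union]
      eps_complete_if_determined[where g = g1 and q = ?union, OF _ g1_union]
      eps_complete_if_determined[where g = g2 and q = ?union, OF _ g2_union]
    by blast
qed

end
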